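(* Let $X$, $Z$ be topological vector spaces, $C\subseteq Z$ a nonempty closed convex cone with $C^-\neq\{0\}$, and $f:X\to\mathcal{F}(Z,C)$ convex. If $f$ is lattice-bounded above on some neighborhood of $x_0\in X$, then $f$ is upper lattice-semicontinuous at $x_0$.
   Context: $\mathcal{F}(Z,C)=\{A\subseteq Z\colon A=\operatorname{cl}(A+C)\}$ (empty set included); $C^-=\{z^*\in Z^*\colon z^*(z)\le0\ \forall z\in C\}$. $f$ is convex iff $tf(x_1)+(1-t)f(x_2)\subseteq f(tx_1+(1-t)x_2)$ for all $x_1,x_2\in X$, $t\in(0,1)$. $f$ is lattice-bounded above on $M\subseteq X$ iff there is $a\in Z$ with $a\in f(x)$ for all $x\in M$. $f$ is upper lattice-semicontinuous at $x_0$ iff $f(x_0)\subseteq\operatorname{cl}\bigcup_{U\in\mathcal{N}(x_0)}\bigcap_{x\in U}f(x)$ ($\mathcal{N}(x_0)$ the neighborhoods of $x_0$); equivalently, for every $z_0\in f(x_0)$ and every neighborhood $V$ of $z_0$ there exist $U\in\mathcal{N}(x_0)$ and $z\in V$ with $z\in f(x)$ for all $x\in U$. *)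

theory Defs
  imports "HOL-Analysis.Analysis"
begin

definition tvs :: "'a::{real_vector,topological_space} itself \<Rightarrow> bool" where
  "tvs _ \<longleftrightarrow> continuous_on UNIV (\<lambda>p::'a \<times> 'a. fst p + snd p)
     \<and> continuous_on UNIV (\<lambda>p::real \<times> 'a. fst p *\<^sub>R snd p)"

definition nhds_sets :: "'a::topological_space \<Rightarrow> 'a set set" where
  "nhds_sets x0 = {U. \<exists>V. open V \<and> x0 \<in> V \<and> V \<subseteq> U}"

definition set_sum :: "'a::real_vector set \<Rightarrow> 'a set \<Rightarrow> 'a set" where
  "set_sum A B = {a + b | a b. a \<in> A \<and> b \<in> B}"

text \<open>The family F(Z,C) (empty set included).\<close>
definition upper_sets :: "'z::{real_vector,topological_space} set \<Rightarrow> 'z set set" where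
  "upper_sets C = {A. A = closure (set_sum A C)}"

definition dual_cone :: "'z::{real_vector,topological_space} set \<Rightarrow> ('z \<Rightarrow> real) set" where
  "dual_cone C = {g. linear g \<and> continuous_on UNIV g \<and> (\<forall>z\<in>C. g z \<le> 0)}"

definition sv_convex :: "('x::real_vector \<Rightarrow> 'z::real_vector set) \<Rightarrow> bool" where
  "sv_convex f \<longleftrightarrow> (\<forall>x1 x2 t. 0 < t \<and> t < 1 \<longrightarrow>
     set_sum ((\<lambda>z. t *\<^sub>R z) ` f x1) ((\<lambda>z. (1 - t) *\<^sub>R z) ` f x2)
       \<subseteq> f (t *\<^sub>R x1 + (1 - t) *\<^sub>R x2))"

definition lattice_bounded_above_on :: "('x \<Rightarrow> 'z set) \<Rightarrow> 'x set \<Rightarrow> bool" where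
  "lattice_bounded_above_on f M \<longleftrightarrow> (\<exists>a. \<forall>x\<in>M. a \<in> f x)"

definition upper_lattice_semicontinuous_at ::
    "('x::topological_space \<Rightarrow> 'z::topological_space set) \<Rightarrow> 'x \<Rightarrow> bool" where
  "upper_lattice_semicontinuous_at f x0 \<longleftrightarrow>
     f x0 \<subseteq> closure (\<Union>U\<in>nhds_sets x0. \<Inter>x\<in>U. f x)"

end

theory Submission
  imports Defs
begin

text \<open>If f is convex and a is in f x for all x near x0, then for every z0 in f x0 and
  0 < s < 1 the point (1 - s) z0 + s a lies in f x for all x in a whole neighbourhood of x0:
  write such an x as (1 - s) x0 + s y with y near x0, where a is in f y.  These points tend to z0
  as s tends to 0, so z0 is in the closure of the values attained uniformly near x0.\<close>

lemma tvs_continuous_on_affine: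
  assumes "tvs TYPE('a::{real_vector,topological_space})"
  shows "continuous_on UNIV (\<lambda>x::'a. r *\<^sub>R x + c)"
proof -
  have scale: "continuous_on UNIV (\<lambda>x::'a. fst (r, x) *\<^sub>R snd (r, x))"
    by (rule continuous_on_compose2[of UNIV "\<lambda>p::real \<times> 'a. fst p *\<^sub>R snd p"])
       (use assms in \<open>auto simp: tvs_def intro: continuous_intros\<close>)
  have "continuous_on UNIV (\<lambda>x::'a. fst (r *\<^sub>R x, c) + snd (r *\<^sub>R x, c))"
    by (rule continuous_on_compose2[of UNIV "\<lambda>p::'a \<times> 'a. fst p + snd p"])
       (use assms scale in \<open>auto simp: tvs_def intro: continuous_intros\<close>)
  then show ?thesis by simp
qed

lemma tvs_continuous_on_line:
  assumes "tvs TYPE('a::{real_vector,topological_space})"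
  shows "continuous_on UNIV (\<lambda>s::real. s *\<^sub>R v + (c::'a))"
proof -
  have scale: "continuous_on UNIV (\<lambda>s::real. fst (s, v) *\<^sub>R snd (s, v))"
    by (rule continuous_on_compose2[of UNIV "\<lambda>p::real \<times> 'a. fst p *\<^sub>R snd p"])
       (use assms in \<open>auto simp: tvs_def intro: continuous_intros\<close>)
  have "continuous_on UNIV (\<lambda>s::real. fst (s *\<^sub>R v, c) + snd (s *\<^sub>R v, c))"
    by (rule continuous_on_compose2[of UNIV "\<lambda>p::'a \<times> 'a. fst p + snd p"])
       (use assms scale in \<open>auto simp: tvs_def intro: continuous_intros\<close>)
  then show ?thesis by simp
qed

lemma tvs_segment_approaches_start:
  fixes z0 a :: "'a::{real_vector,topological_space}"
  assumes "tvs TYPE('a)" and "open V" and "z0 \<in> V"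
  obtains s where "0 < s" "s < 1" "(1 - s) *\<^sub>R z0 + s *\<^sub>R a \<in> V"
proof -
  define h where "h s = s *\<^sub>R (a - z0) + z0" for s :: real
  have "open (h -` V)"
    using tvs_continuous_on_line[OF assms(1)] assms(2)
    unfolding h_def by (metis continuous_on_open_vimage open_UNIV Int_UNIV_right)
  moreover have "0 \<in> h -` V" using assms(3) by (simp add: h_def)
  ultimately obtain e where "e > 0" "ball 0 e \<subseteq> h -` V"
    using open_contains_ball by blast
  then have "h (min (e/2) (1/2)) \<in> V"
    by (auto simp: dist_real_def subset_iff)
  then show ?thesis
    by (intro that[of "min (e/2) (1/2)"]) (use \<open>e > 0\<close> in \<open>auto simp: h_def algebra_simps\<close>)
qed

lemma sv_convex_uniform_near:
  fixes f :: "'x::{real_vector,topological_space} \<Rightarrow> 'z::real_vector set"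
  assumes "tvs TYPE('x)" and "sv_convex f"
    and "U \<in> nhds_sets x0" and bound: "\<forall>x\<in>U. a \<in> f x"
    and z0: "z0 \<in> f x0" and s: "0 < s" "s < 1"
  shows "\<exists>W\<in>nhds_sets x0. \<forall>x\<in>W. (1 - s) *\<^sub>R z0 + s *\<^sub>R a \<in> f x"
proof -
  obtain U' where U': "open U'" "x0 \<in> U'" "U' \<subseteq> U"
    using assms(3) unfolding nhds_sets_def by blast
  define g where "g x = (1/s) *\<^sub>R x + (1 - 1/s) *\<^sub>R x0" for x :: 'x
  define W where "W = g -` U'"
  have "open W"
    using tvs_continuous_on_affine[OF assms(1)] U'(1)
    unfolding W_def g_def by (metis continuous_on_open_vimage open_UNIV Int_UNIV_right)
  moreover have "x0 \<in> W"
    using U'(2) s by (simp add: W_def g_def algebra_simps)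
  ultimately have W: "W \<in> nhds_sets x0" unfolding nhds_sets_def by blast
  have "(1 - s) *\<^sub>R z0 + s *\<^sub>R a \<in> f x" if "x \<in> W" for x
  proof -
    have "a \<in> f (g x)" using that U'(3) bound by (auto simp: W_def)
    then have "(1 - s) *\<^sub>R z0 + (1 - (1 - s)) *\<^sub>R a
        \<in> set_sum ((\<lambda>z. (1 - s) *\<^sub>R z) ` f x0) ((\<lambda>z. (1 - (1 - s)) *\<^sub>R z) ` f (g x))"
      unfolding set_sum_def using z0 by blast
    also have "\<dots> \<subseteq> f ((1 - s) *\<^sub>R x0 + (1 - (1 - s)) *\<^sub>R g x)"
    proof -
      have "0 < 1 - s" "1 - s < 1" using s by auto
      then show ?thesis using assms(2) unfolding sv_convex_def by blast
    qed
    also have "(1 - s) *\<^sub>R x0 + (1 - (1 - s)) *\<^sub>R g x = x"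
      using s by (simp add: g_def algebra_simps)
    finally show ?thesis by simp
  qed
  with W show ?thesis by blast
qed

lemma sv_convex_upper_lattice_semicontinuous_at:
  fixes f :: "'x::{real_vector,topological_space} \<Rightarrow> 'z::{real_vector,topological_space} set"
  assumes "tvs TYPE('x)" and "tvs TYPE('z)" and "sv_convex f"
    and "\<exists>U\<in>nhds_sets x0. lattice_bounded_above_on f U"
  shows "upper_lattice_semicontinuous_at f x0"
  unfolding upper_lattice_semicontinuous_at_def
proof
  fix z0 assume z0: "z0 \<in> f x0"
  obtain U a where U: "U \<in> nhds_sets x0" and a: "\<forall>x\<in>U. a \<in> f x"
    using assms(4) unfolding lattice_bounded_above_on_def by blast
  show "z0 \<in> closure (\<Union>W\<in>nhds_sets x0. \<Inter>x\<in>W. f x)"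
    unfolding closure_iff_nhds_not_empty
  proof (intro allI impI)
    fix A V assume "V \<subseteq> A" "open V" "z0 \<in> V"
    then obtain s where s: "0 < s" "s < 1" "(1 - s) *\<^sub>R z0 + s *\<^sub>R a \<in> V"
      using tvs_segment_approaches_start[OF assms(2)] by blast
    then obtain W where "W \<in> nhds_sets x0" "\<forall>x\<in>W. (1 - s) *\<^sub>R z0 + s *\<^sub>R a \<in> f x"
      using sv_convex_uniform_near[OF assms(1,3) U a z0] by blast
    with s \<open>V \<subseteq> A\<close> show "(\<Union>W\<in>nhds_sets x0. \<Inter>x\<in>W. f x) \<inter> A \<noteq> {}" by blast
  qed
qed

theorem mainTheorem7:
  fixes f :: "'x::{real_vector,topological_space} \<Rightarrow> 'z::{real_vector,topological_space} set"
    and C :: "'z set" and x0 :: 'x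
  assumes "tvs TYPE('x)" and "tvs TYPE('z)"
    and "C \<noteq> {}" and "closed C" and "convex_cone C"
    and "dual_cone C \<noteq> {(\<lambda>_. 0)}"
    and "\<forall>x. f x \<in> upper_sets C"
    and "sv_convex f"
    and "\<exists>U\<in>nhds_sets x0. lattice_bounded_above_on f U"
  shows "upper_lattice_semicontinuous_at f x0"
  using sv_convex_upper_lattice_semicontinuous_at[OF assms(1,2,8,9)] .

end
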